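(* Let $(X,T,Y)$, $\psi$, $\mathcal G=\{g_\theta:\theta\in\Theta\}$ and $L$ be as described in the context, with $\psi$ satisfying Assumption 1, and suppose the policy class is correctly specified for the surrogate loss, i.e. $$\mathcal G\cap\Big(\operatorname*{argmin}_{g\ \text{unconstrained}}\mathbb E\big[|\psi|\, l(g(X),\operatorname{sign}(\psi))\big]\Big)\neq\varnothing,$$ where the argmin ranges over all measurable $g:\mathcal X\to\mathbb R$. Define $$m(X;\theta)=\mathbb E\big[|\psi|\, l'(g_\theta(X),\operatorname{sign}(\psi))\mid X\big].$$ Then for $\theta^*\in\Theta$, $$\theta^*\in\operatorname*{argmin}_{\theta\in\Theta}L(\theta)\iff m(X;\theta^* )=0\ \text{almost surely}.$$
   Context: $X$ is a context taking values in a space $\mathcal X$, $T\in\{-1,1\}$ is a treatment, $Y\in\mathbb R$ is an outcome, and $Y(-1),Y(1)$ are potential outcomes with $Y=Y(T)$ and $Y(t)\perp T\mid X$ for each $t$. A score variable $\psi$ is a real-valued random variable depending on observables. Assumption 1: $\mathbb E[\psi\mid X]=\mathbb E[Y(1)-Y(-1)\mid X]$ almost surely and $\mathbb E[|\psi|]<\infty$. $\Theta\subseteq\mathbb R^d$ and each $g_\theta:\mathcal X\to\mathbb R$ is measurable. The logistic surrogate loss is $l(g,s)=2\log(1+\exp(g))-(s+1)g$ for $g\in\mathbb R$, $s\in\{-1,1\}$, with derivative in $g$ given by $l'(g,s)=2\sigma(g)-(s+1)$, where $\sigma(g)=\exp(g)/(1+\exp(g))$. The population surrogate risk is $L(\theta)=\mathbb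 E[|\psi|\, l(g_\theta(X),\operatorname{sign}(\psi))]$. *)

theory Defs
  imports "HOL-Probability.Probability"
begin

definition sigmoid :: "real \<Rightarrow> real" where
  "sigmoid g = exp g / (1 + exp g)"

definition logistic_loss :: "real \<Rightarrow> real \<Rightarrow> real" where
  "logistic_loss g s = 2 * ln (1 + exp g) - (s + 1) * g"

definition logistic_loss_deriv :: "real \<Rightarrow> real \<Rightarrow> real" where
  "logistic_loss_deriv g s = 2 * sigmoid g - (s + 1)"

definition cond_exp_given ::
  "'w measure \<Rightarrow> 'x measure \<Rightarrow> ('w \<Rightarrow> 'x) \<Rightarrow> ('w \<Rightarrow> real) \<Rightarrow> ('w \<Rightarrow> real)" where
  "cond_exp_given M MX X f = real_cond_exp M (vimage_algebra (space M) X MX) f"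

definition cond_indep_given ::
  "'w measure \<Rightarrow> 'x measure \<Rightarrow> ('w \<Rightarrow> 'x) \<Rightarrow> ('w \<Rightarrow> real) \<Rightarrow> ('w \<Rightarrow> real) \<Rightarrow> bool" where
  "cond_indep_given M MX X U V \<longleftrightarrow>
     (\<forall>A\<in>sets borel. \<forall>B\<in>sets borel.
        AE w in M. cond_exp_given M MX X
                     (\<lambda>v. indicator (U -` A) v * indicator (V -` B) v) w
                 = cond_exp_given M MX X (indicator (U -` A)) w
                   * cond_exp_given M MX X (indicator (V -` B)) w)"

text \<open>Population surrogate risk of a (not necessarily parametrised) policy score g.
  Nonnegative integrand, so the nonnegative integral (possibly infinite) is used.\<close>
definition surrogate_risk ::
  "'w measure \<Rightarrow> ('w \<Rightarrow> 'x) \<Rightarrow> ('w \<Rightarrow> real) \<Rightarrow> ('x \<Rightarrow> real) \<Rightarrow> ennreal" where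
  "surrogate_risk M X psi g =
     (\<integral>\<^sup>+ w. ennreal (\<bar>psi w\<bar> * logistic_loss (g (X w)) (sgn (psi w))) \<partial>M)"

end

theory Submission
  imports Defs
begin

text \<open>
  Split \<open>\<psi> = \<psi>\<^sup>+ - \<psi>\<^sup>-\<close>. Pointwise, \<open>|\<psi>| l(t, sign \<psi>) = 2 \<psi>\<^sup>+ softplus(-t) + 2 \<psi>\<^sup>- softplus(t)\<close>,
  so by the tower property the risk of a policy \<open>g\<close> is the expectation of
  \<open>c(A, B, g(X))\<close> with \<open>A = E[\<psi>\<^sup>+|X]\<close>, \<open>B = E[\<psi>\<^sup>-|X]\<close>, and likewise
  \<open>m(X; \<theta>) = \<partial>\<^sub>t c(A, B, g\<^sub>\<theta>(X)) = 2((A + B) \<sigma>(g\<^sub>\<theta>(X)) - A)\<close>.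
  Since \<open>c(A, B, \<cdot>)\<close> is convex, vanishing of its derivative a.s. makes \<open>g\<^sub>\<theta>\<close> a pointwise, hence
  global, minimiser. Conversely, a global minimiser cannot be improved by shifting it by \<open>\<pm>1/(n+1)\<close>
  on the \<open>X\<close>-measurable event where that shift decreases \<open>c\<close>, so the one-sided derivatives have
  the right signs a.s., and the derivative vanishes a.s.  By correct specification, minimising over
  \<open>\<Theta>\<close> is the same as minimising over all measurable policies.
\<close>

definition softplus :: "real \<Rightarrow> real" where
  "softplus t = ln (1 + exp t)"

text \<open>\<open>a\<close> and \<open>b\<close> stand for the conditional expectations of \<open>\<psi>\<^sup>+\<close> and \<open>\<psi>\<^sup>-\<close> given \<open>X\<close>.\<close>
definition weighted_logistic_loss :: "real \<Rightarrow> real \<Rightarrow> real \<Rightarrow> real" where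
  "weighted_logistic_loss a b t = 2 * (a * softplus (- t) + b * softplus t)"

definition weighted_logistic_loss_deriv :: "real \<Rightarrow> real \<Rightarrow> real \<Rightarrow> real" where
  "weighted_logistic_loss_deriv a b t = 2 * ((a + b) * sigmoid t - a)"

lemma softplus_nonneg: "0 \<le> softplus t"
  unfolding softplus_def by simp

lemma softplus_uminus: "softplus (- t) = softplus t - t"
proof -
  have "1 + exp (- t) = (1 + exp t) * exp (- t)"
    by (simp add: distrib_right exp_minus_inverse)
  then have "ln (1 + exp (- t)) = ln (1 + exp t) + ln (exp (- t))"
    by (simp add: ln_mult_pos add_pos_pos)
  then show ?thesis
    unfolding softplus_def by simp
qed

lemma sigmoid_gt_0: "0 < sigmoid t"
  and sigmoid_less_1: "sigmoid t < 1"
  unfolding sigmoid_def by (auto simp: add_pos_pos)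

lemma softplus_above_tangent: "softplus t + sigmoid t * (s - t) \<le> softplus s"
proof -
  define q where "q = sigmoid t"
  have q: "0 < q" "q < 1"
    unfolding q_def by (simp_all add: sigmoid_gt_0 sigmoid_less_1)
  have "1 + exp t \<noteq> 0"
    by (metis add_pos_pos exp_gt_zero less_irrefl zero_less_one)
  then have ratio: "1 + exp s = (1 + exp t) * ((1 - q) + q * exp (s - t))"
    unfolding q_def sigmoid_def by (simp add: field_simps exp_diff)
  have "exp (q * (s - t)) \<le> (1 - q) + q * exp (s - t)"
    using convex_onD[OF exp_convex, of q 0 "s - t"] q by simp
  then have "q * (s - t) \<le> ln ((1 - q) + q * exp (s - t))"
    by (metis exp_gt_zero ln_exp ln_le_cancel_iff order_less_le_trans)
  moreover have "ln (1 + exp s) = ln (1 + exp t) + ln ((1 - q) + q * exp (s - t))"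
    unfolding ratio using q by (intro ln_mult_pos) (auto intro!: add_pos_pos add_pos_nonneg)
  ultimately show ?thesis
    unfolding softplus_def q_def by simp
qed

lemma weighted_logistic_loss_above_tangent:
  assumes "0 \<le> a" "0 \<le> b"
  shows "weighted_logistic_loss a b t + weighted_logistic_loss_deriv a b t * (s - t)
           \<le> weighted_logistic_loss a b s"
proof -
  have plus: "softplus t + sigmoid t * (s - t) \<le> softplus s"
    by (rule softplus_above_tangent)
  then have minus: "softplus (- t) + (sigmoid t - 1) * (s - t) \<le> softplus (- s)"
    by (simp add: softplus_uminus algebra_simps)
  show ?thesis
    using mult_left_mono[OF plus \<open>0 \<le> b\<close>] mult_left_mono[OF minus \<open>0 \<le> a\<close>]
    unfolding weighted_logistic_loss_def weighted_logistic_loss_deriv_def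
    by (simp add: algebra_simps)
qed

lemma weighted_logistic_loss_nonneg: "0 \<le> a \<Longrightarrow> 0 \<le> b \<Longrightarrow> 0 \<le> weighted_logistic_loss a b t"
  unfolding weighted_logistic_loss_def by (simp add: softplus_nonneg)

lemma abs_mult_logistic_loss:
  "\<bar>p\<bar> * logistic_loss t (sgn p) = weighted_logistic_loss (max p 0) (max (- p) 0) t"
  by (cases "p > 0"; cases "p < 0")
     (auto simp: logistic_loss_def weighted_logistic_loss_def softplus_uminus
        softplus_def[symmetric] algebra_simps)

lemma abs_mult_logistic_loss_deriv:
  "\<bar>p\<bar> * logistic_loss_deriv t (sgn p) = weighted_logistic_loss_deriv (max p 0) (max (- p) 0) t"
  by (cases "p > 0"; cases "p < 0")
     (auto simp: logistic_loss_deriv_def weighted_logistic_loss_deriv_def algebra_simps)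

lemma ennreal_weighted_logistic_loss:
  assumes "0 \<le> a" "0 \<le> b"
  shows "ennreal (weighted_logistic_loss a b t)
           = ennreal (2 * softplus (- t)) * ennreal a + ennreal (2 * softplus t) * ennreal b"
  using assms
  by (simp add: weighted_logistic_loss_def softplus_nonneg ennreal_plus ennreal_mult''
      algebra_simps)

lemma borel_measurable_sigmoid [measurable]: "sigmoid \<in> borel_measurable borel"
  unfolding sigmoid_def by measurable

lemma borel_measurable_softplus [measurable]: "softplus \<in> borel_measurable borel"
  unfolding softplus_def by measurable

lemma borel_measurable_weighted_logistic_loss [measurable]:
  assumes [measurable]: "a \<in> borel_measurable N" "b \<in> borel_measurable N" "t \<in> borel_measurable N"
  shows "(\<lambda>x. weighted_logistic_loss (a x) (b x) (t x)) \<in> borel_measurable N"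
  unfolding weighted_logistic_loss_def by measurable

lemma borel_measurable_weighted_logistic_loss_deriv [measurable]:
  assumes [measurable]: "a \<in> borel_measurable N" "b \<in> borel_measurable N" "t \<in> borel_measurable N"
  shows "(\<lambda>x. weighted_logistic_loss_deriv (a x) (b x) (t x)) \<in> borel_measurable N"
  unfolding weighted_logistic_loss_deriv_def by measurable

lemma tendsto_sigmoid [tendsto_intros]:
  assumes "(f \<longlongrightarrow> l) F"
  shows "((\<lambda>x. sigmoid (f x)) \<longlongrightarrow> sigmoid l) F"
proof -
  have "1 + exp l \<noteq> 0"
    by (metis add_pos_pos exp_gt_zero less_irrefl zero_less_one)
  then show ?thesis
    unfolding sigmoid_def by (intro tendsto_intros assms)
qed

context sigma_finite_subalgebra
begin

lemma nn_cond_exp_eq_real_cond_exp: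
  assumes "integrable M f" and nonneg: "\<And>x. 0 \<le> f x"
  shows "AE x in M. nn_cond_exp M F (\<lambda>x. ennreal (f x)) x = ennreal (real_cond_exp M F f x)"
proof -
  have [measurable]: "f \<in> borel_measurable M"
    using assms(1) by blast
  have "(\<lambda>x. ennreal (- f x)) = (\<lambda>x. 0)"
    using nonneg by (auto simp: ennreal_neg)
  moreover have "AE x in M. 0 = nn_cond_exp M F (\<lambda>x. 0) x"
    by (rule nn_cond_exp_F_meas) auto
  ultimately have neg_part: "AE x in M. nn_cond_exp M F (\<lambda>x. ennreal (- f x)) x = 0"
    by auto
  have "(\<integral>\<^sup>+ x. 1 * nn_cond_exp M F (\<lambda>x. ennreal (f x)) x \<partial>M) = (\<integral>\<^sup>+ x. 1 * ennreal (f x) \<partial>M)"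
    by (rule nn_cond_exp_intg) auto
  also have "\<dots> < \<infinity>"
    using assms by (simp add: integrable_iff_bounded less_top[symmetric])
  finally have "AE x in M. nn_cond_exp M F (\<lambda>x. ennreal (f x)) x \<noteq> \<infinity>"
    by (intro nn_integral_PInf_AE) auto
  with neg_part show ?thesis
    by eventually_elim (auto simp: real_cond_exp_def ennreal_enn2real_if)
qed

lemma nn_integral_mult_real_cond_exp:
  assumes "h \<in> borel_measurable F" "integrable M f" "\<And>x. 0 \<le> f x"
  shows "(\<integral>\<^sup>+ x. h x * ennreal (real_cond_exp M F f x) \<partial>M) = (\<integral>\<^sup>+ x. h x * ennreal (f x) \<partial>M)"
proof -
  have "(\<integral>\<^sup>+ x. h x * ennreal (real_cond_exp M F f x) \<partial>M)
          = (\<integral>\<^sup>+ x. h x * nn_cond_exp M F (\<lambda>x. ennreal (f x)) x \<partial>M)"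
    using nn_cond_exp_eq_real_cond_exp[OF assms(2,3)] by (intro nn_integral_cong_AE) auto
  also have "\<dots> = (\<integral>\<^sup>+ x. h x * ennreal (f x) \<partial>M)"
    using assms by (intro nn_cond_exp_intg) auto
  finally show ?thesis .
qed

end

locale surrogate_risk_setting = prob_space M for M :: "'w measure" +
  fixes MX :: "'x measure" and X :: "'w \<Rightarrow> 'x" and psi :: "'w \<Rightarrow> real"
  assumes measurable_X [measurable]: "X \<in> measurable M MX"
    and integrable_psi: "integrable M psi"
begin

abbreviation sigma_X :: "'w measure" where
  "sigma_X \<equiv> vimage_algebra (space M) X MX"

abbreviation psi_pos_ce :: "'w \<Rightarrow> real" where
  "psi_pos_ce \<equiv> real_cond_exp M sigma_X (\<lambda>w. max (psi w) 0)"

abbreviation psi_neg_ce :: "'w \<Rightarrow> real" where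
  "psi_neg_ce \<equiv> real_cond_exp M sigma_X (\<lambda>w. max (- psi w) 0)"

lemma subalgebra_sigma_X: "subalgebra M sigma_X"
  unfolding subalgebra_def using sets_image_in_sets[OF refl measurable_X] by simp

interpretation sub: finite_measure_subalgebra M sigma_X
  by unfold_locales (rule subalgebra_sigma_X)

lemma measurable_X_sigma_X [measurable]: "X \<in> measurable sigma_X MX"
  using measurable_space[OF measurable_X] by (intro measurable_vimage_algebra1) auto

lemma borel_measurable_psi [measurable]: "psi \<in> borel_measurable M"
  using integrable_psi by blast

lemma integrable_psi_pos: "integrable M (\<lambda>w. max (psi w) 0)"
  and integrable_psi_neg: "integrable M (\<lambda>w. max (- psi w) 0)"
  using integrable_psi by (auto intro: integrable_max)

lemma psi_pos_ce_nonneg: "AE w in M. 0 \<le> psi_pos_ce w"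
  and psi_neg_ce_nonneg: "AE w in M. 0 \<le> psi_neg_ce w"
  by (auto intro: sub.real_cond_exp_pos)

lemma surrogate_risk_eq_nn_integral:
  assumes [measurable]: "g \<in> borel_measurable MX"
  shows "surrogate_risk M X psi g
           = (\<integral>\<^sup>+ w. ennreal (weighted_logistic_loss (psi_pos_ce w) (psi_neg_ce w) (g (X w))) \<partial>M)"
proof -
  let ?u = "\<lambda>w. ennreal (2 * softplus (- g (X w)))" and ?v = "\<lambda>w. ennreal (2 * softplus (g (X w)))"
  have "surrogate_risk M X psi g
          = (\<integral>\<^sup>+ w. ?u w * ennreal (max (psi w) 0) + ?v w * ennreal (max (- psi w) 0) \<partial>M)"
    unfolding surrogate_risk_def abs_mult_logistic_loss
    by (simp add: ennreal_weighted_logistic_loss)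
  also have "\<dots> = (\<integral>\<^sup>+ w. ?u w * ennreal (max (psi w) 0) \<partial>M)
                  + (\<integral>\<^sup>+ w. ?v w * ennreal (max (- psi w) 0) \<partial>M)"
    by (rule nn_integral_add) auto
  also have "\<dots> = (\<integral>\<^sup>+ w. ?u w * ennreal (psi_pos_ce w) \<partial>M) + (\<integral>\<^sup>+ w. ?v w * ennreal (psi_neg_ce w) \<partial>M)"
    using integrable_psi_pos integrable_psi_neg by (simp add: sub.nn_integral_mult_real_cond_exp)
  also have "\<dots> = (\<integral>\<^sup>+ w. ?u w * ennreal (psi_pos_ce w) + ?v w * ennreal (psi_neg_ce w) \<partial>M)"
    by (rule nn_integral_add[symmetric]) auto
  also have "\<dots> = (\<integral>\<^sup>+ w. ennreal (weighted_logistic_loss (psi_pos_ce w) (psi_neg_ce w) (g (X w))) \<partial>M)"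
    using psi_pos_ce_nonneg psi_neg_ce_nonneg
    by (intro nn_integral_cong_AE, eventually_elim) (simp add: ennreal_weighted_logistic_loss)
  finally show ?thesis .
qed


lemma cond_exp_abs_mult_logistic_loss_deriv:
  assumes [measurable]: "g \<in> borel_measurable MX"
  shows "AE w in M. cond_exp_given M MX X
             (\<lambda>v. \<bar>psi v\<bar> * logistic_loss_deriv (g (X v)) (sgn (psi v))) w
           = weighted_logistic_loss_deriv (psi_pos_ce w) (psi_neg_ce w) (g (X w))"
proof -
  let ?p = "\<lambda>v. max (psi v) 0" and ?n = "\<lambda>v. max (- psi v) 0" and ?s = "\<lambda>v. 2 * sigmoid (g (X v))"
  have integrand: "(\<lambda>v. \<bar>psi v\<bar> * logistic_loss_deriv (g (X v)) (sgn (psi v)))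
                     = (\<lambda>v. ?s v * (?p v + ?n v) - 2 * ?p v)"
    by (simp add: abs_mult_logistic_loss_deriv weighted_logistic_loss_deriv_def algebra_simps)
  have "integrable M (\<lambda>v. ?s v * (?p v + ?n v))"
  proof (rule Bochner_Integration.integrable_bound)
    show "integrable M (\<lambda>v. 2 * psi v)"
      using integrable_psi by simp
    have "\<bar>2 * sigmoid t * (max p 0 + max (- p) 0)\<bar> \<le> \<bar>2 * p\<bar>" for t p :: real
    proof -
      have "sigmoid t * \<bar>p\<bar> \<le> \<bar>p\<bar>"
        using sigmoid_gt_0[of t] sigmoid_less_1[of t] by (simp add: mult_left_le_one_le)
      moreover have "max p 0 + max (- p) 0 = \<bar>p\<bar>"
        by auto
      ultimately show ?thesis
        using sigmoid_gt_0[of t] by (simp add: abs_mult)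
    qed
    then show "AE v in M. norm (?s v * (?p v + ?n v)) \<le> norm (2 * psi v)"
      by simp
  qed measurable
  moreover have "integrable M (\<lambda>v. 2 * ?p v)"
    using integrable_psi_pos by simp
  ultimately have "AE w in M. real_cond_exp M sigma_X (\<lambda>v. ?s v * (?p v + ?n v) - 2 * ?p v) w
      = real_cond_exp M sigma_X (\<lambda>v. ?s v * (?p v + ?n v)) w - real_cond_exp M sigma_X (\<lambda>v. 2 * ?p v) w"
    by (rule sub.real_cond_exp_diff)
  moreover have "AE w in M. real_cond_exp M sigma_X (\<lambda>v. ?s v * (?p v + ?n v)) w
      = ?s w * real_cond_exp M sigma_X (\<lambda>v. ?p v + ?n v) w"
    using \<open>integrable M (\<lambda>v. ?s v * (?p v + ?n v))\<close> by (intro sub.real_cond_exp_mult) auto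
  moreover have "AE w in M. real_cond_exp M sigma_X (\<lambda>v. ?p v + ?n v) w = psi_pos_ce w + psi_neg_ce w"
    using integrable_psi_pos integrable_psi_neg by (rule sub.real_cond_exp_add)
  moreover have "AE w in M. real_cond_exp M sigma_X (\<lambda>v. 2 * ?p v) w = 2 * psi_pos_ce w"
    using integrable_psi_pos by (rule sub.real_cond_exp_cmult)
  ultimately show ?thesis
    unfolding cond_exp_given_def integrand
    by eventually_elim (simp add: weighted_logistic_loss_deriv_def algebra_simps)
qed

lemma surrogate_risk_zero_finite: "surrogate_risk M X psi (\<lambda>_. 0) < \<infinity>"
proof -
  have "surrogate_risk M X psi (\<lambda>_. 0) = (\<integral>\<^sup>+ w. ennreal (\<bar>psi w\<bar> * (2 * ln 2)) \<partial>M)"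
    unfolding surrogate_risk_def logistic_loss_def by simp
  also have "\<dots> = ennreal (\<integral> w. \<bar>psi w\<bar> * (2 * ln 2) \<partial>M)"
    using integrable_psi by (intro nn_integral_eq_integral) auto
  finally show ?thesis
    by simp
qed


lemma stationary_imp_surrogate_risk_minimal:
  assumes [measurable]: "g0 \<in> borel_measurable MX" "h \<in> borel_measurable MX"
    and stationary: "AE w in M. weighted_logistic_loss_deriv (psi_pos_ce w) (psi_neg_ce w) (g0 (X w)) = 0"
  shows "surrogate_risk M X psi g0 \<le> surrogate_risk M X psi h"
  unfolding surrogate_risk_eq_nn_integral[OF assms(1)] surrogate_risk_eq_nn_integral[OF assms(2)]
  using stationary psi_pos_ce_nonneg psi_neg_ce_nonneg
proof (intro nn_integral_mono_AE, eventually_elim)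
  case (elim w)
  then show ?case
    using weighted_logistic_loss_above_tangent[of "psi_pos_ce w" "psi_neg_ce w" "g0 (X w)" "h (X w)"]
    by (auto intro: ennreal_leI)
qed

lemma surrogate_risk_minimal_imp_shift_deriv_nonneg:
  assumes [measurable]: "g0 \<in> borel_measurable MX"
    and minimal: "\<forall>h\<in>borel_measurable MX. surrogate_risk M X psi g0 \<le> surrogate_risk M X psi h"
  shows "AE w in M. 0 \<le> d * weighted_logistic_loss_deriv (psi_pos_ce w) (psi_neg_ce w) (g0 (X w) + d)"
proof -
  let ?c = "\<lambda>w. weighted_logistic_loss (psi_pos_ce w) (psi_neg_ce w)"
  let ?c' = "\<lambda>w. weighted_logistic_loss_deriv (psi_pos_ce w) (psi_neg_ce w)"
  define E where "E = {w \<in> space M. d * ?c' w (g0 (X w) + d) < 0}"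
  have "{w \<in> space sigma_X. d * ?c' w (g0 (X w) + d) < 0} \<in> sets sigma_X"
    by measurable
  then obtain S where [measurable]: "S \<in> sets MX" and E: "E = X -` S \<inter> space M"
    using measurable_space[OF measurable_X] unfolding E_def by (auto simp: sets_vimage_algebra2)
  \<comment> \<open>shifting \<open>g0\<close> by \<open>d\<close> on \<open>S\<close> strictly decreases the loss exactly on \<open>E\<close>\<close>
  define h where "h x = g0 x + d * indicator S x" for x
  have [measurable]: "h \<in> borel_measurable MX"
    unfolding h_def by measurable
  define f0 where "f0 w = ennreal (?c w (g0 (X w)))" for w
  define fh where "fh w = ennreal (?c w (h (X w)))" for w
  have measurable_f [measurable]: "f0 \<in> borel_measurable M" "fh \<in> borel_measurable M"
    unfolding f0_def fh_def by measurable
  have descent: "AE w in M. fh w \<le> f0 w \<and> (w \<in> E \<longrightarrow> fh w < f0 w)"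
    using psi_pos_ce_nonneg psi_neg_ce_nonneg AE_space
  proof eventually_elim
    case (elim w)
    have "?c w (g0 (X w) + d) - d * ?c' w (g0 (X w) + d) \<le> ?c w (g0 (X w))"
      using weighted_logistic_loss_above_tangent[of _ _ "g0 (X w) + d" "g0 (X w)"] elim
      by (simp add: algebra_simps)
    moreover have "w \<in> E \<longleftrightarrow> X w \<in> S"
      using elim unfolding E by simp
    moreover have "w \<in> E \<longleftrightarrow> d * ?c' w (g0 (X w) + d) < 0"
      using elim unfolding E_def by simp
    ultimately show ?case
      using elim weighted_logistic_loss_nonneg[of "psi_pos_ce w" "psi_neg_ce w" "g0 (X w) + d"]
      unfolding f0_def fh_def h_def
      by (cases "X w \<in> S") (auto simp: ennreal_less_iff intro: ennreal_leI)
  qed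
  have "integral\<^sup>N M f0 = surrogate_risk M X psi g0"
    unfolding f0_def by (simp add: surrogate_risk_eq_nn_integral)
  moreover have "integral\<^sup>N M fh = surrogate_risk M X psi h"
    unfolding fh_def by (simp add: surrogate_risk_eq_nn_integral)
  moreover have "surrogate_risk M X psi g0 < \<infinity>"
    using minimal surrogate_risk_zero_finite by (auto intro: le_less_trans)
  moreover have "integral\<^sup>N M fh \<le> integral\<^sup>N M f0"
    using descent by (intro nn_integral_mono_AE) auto
  ultimately have "integral\<^sup>N M fh \<noteq> \<infinity>" "\<not> integral\<^sup>N M fh < integral\<^sup>N M f0"
    using minimal by (auto simp: not_less)
  moreover have "AE w in M. fh w \<le> f0 w"
    using descent by eventually_elim simp
  ultimately have "AE w in M. f0 w \<le> fh w"
    using nn_integral_less[OF measurable_f(2,1)] by blast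
  then have "AE w in M. w \<notin> E"
    using descent by eventually_elim auto
  then show ?thesis
    using AE_space by eventually_elim (auto simp: E_def)
qed

lemma surrogate_risk_minimal_imp_stationary:
  assumes [measurable]: "g0 \<in> borel_measurable MX"
    and minimal: "\<forall>h\<in>borel_measurable MX. surrogate_risk M X psi g0 \<le> surrogate_risk M X psi h"
  shows "AE w in M. weighted_logistic_loss_deriv (psi_pos_ce w) (psi_neg_ce w) (g0 (X w)) = 0"
proof -
  let ?c' = "\<lambda>w. weighted_logistic_loss_deriv (psi_pos_ce w) (psi_neg_ce w)"
  have one_sided: "AE w in M. 0 \<le> e * ?c' w (g0 (X w))" for e :: real
  proof -
    have "AE w in M. \<forall>n. 0 \<le> (inverse (real (Suc n)) * e) * ?c' w (g0 (X w) + inverse (real (Suc n)) * e)"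
      unfolding AE_all_countable
      by (intro allI surrogate_risk_minimal_imp_shift_deriv_nonneg[OF assms])
    then show ?thesis
    proof eventually_elim
      case (elim w)
      then have "\<forall>n. 0 \<le> e * ?c' w (g0 (X w) + inverse (real (Suc n)) * e)"
        by (simp add: mult.assoc zero_le_mult_iff)
      moreover have "(\<lambda>n. e * ?c' w (g0 (X w) + inverse (real (Suc n)) * e))
                       \<longlonglongrightarrow> e * ?c' w (g0 (X w) + 0 * e)"
        unfolding weighted_logistic_loss_deriv_def
        by (intro tendsto_intros LIMSEQ_inverse_real_of_nat)
      ultimately show ?case
        using LIMSEQ_le_const by fastforce
    qed
  qed
  from one_sided[of 1] one_sided[of "-1"] show ?thesis
    by eventually_elim simp
qed

lemma surrogate_risk_minimal_iff_cond_exp_deriv_zero: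
  assumes [measurable]: "g0 \<in> borel_measurable MX"
  shows "(\<forall>h\<in>borel_measurable MX. surrogate_risk M X psi g0 \<le> surrogate_risk M X psi h)
     \<longleftrightarrow> (AE w in M. cond_exp_given M MX X
             (\<lambda>v. \<bar>psi v\<bar> * logistic_loss_deriv (g0 (X v)) (sgn (psi v))) w = 0)"
proof -
  have "(AE w in M. cond_exp_given M MX X
             (\<lambda>v. \<bar>psi v\<bar> * logistic_loss_deriv (g0 (X v)) (sgn (psi v))) w = 0)
     \<longleftrightarrow> (AE w in M. weighted_logistic_loss_deriv (psi_pos_ce w) (psi_neg_ce w) (g0 (X w)) = 0)"
    using cond_exp_abs_mult_logistic_loss_deriv[OF assms] by (rule eventually_cong) auto
  then show ?thesis
    using stationary_imp_surrogate_risk_minimal surrogate_risk_minimal_imp_stationary assms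
    by blast
qed

end

theorem theorem2:
  fixes M :: "'w measure" and MX :: "'x measure"
    and X :: "'w \<Rightarrow> 'x" and T Y Y1 Ym1 psi :: "'w \<Rightarrow> real"
    and \<Theta> :: "(real ^ 'd) set" and g :: "real ^ 'd \<Rightarrow> 'x \<Rightarrow> real"
    and \<theta>s :: "real ^ 'd"
  assumes "prob_space M"
    and "X \<in> measurable M MX"
    and "T \<in> borel_measurable M" and "Y \<in> borel_measurable M"
    and "Y1 \<in> borel_measurable M" and "Ym1 \<in> borel_measurable M"
    and "psi \<in> borel_measurable M"
    and "\<forall>w\<in>space M. T w \<in> {-1, 1}"
    and "\<forall>w\<in>space M. Y w = (if T w = 1 then Y1 w else Ym1 w)"
    and "cond_indep_given M MX X Y1 T"
    and "cond_indep_given M MX X Ym1 T"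
    \<comment> \<open>Assumption 1\<close>
    and "AE w in M. cond_exp_given M MX X psi w = cond_exp_given M MX X (\<lambda>v. Y1 v - Ym1 v) w"
    and "integrable M psi"
    \<comment> \<open>measurable policy class\<close>
    and "\<forall>\<theta>\<in>\<Theta>. g \<theta> \<in> borel_measurable MX"
    \<comment> \<open>correct specification\<close>
    and "\<exists>\<theta>0\<in>\<Theta>. \<forall>h \<in> borel_measurable MX.
           surrogate_risk M X psi (g \<theta>0) \<le> surrogate_risk M X psi h"
    and "\<theta>s \<in> \<Theta>"
  shows "(\<forall>\<theta>\<in>\<Theta>. surrogate_risk M X psi (g \<theta>s) \<le> surrogate_risk M X psi (g \<theta>))
     \<longleftrightarrow> (AE w in M. cond_exp_given M MX X
             (\<lambda>v. \<bar>psi v\<bar> * logistic_loss_deriv (g \<theta>s (X v)) (sgn (psi v))) w = 0)"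
proof -
  interpret surrogate_risk_setting M MX X psi
    using assms(1,2,13) by (simp add: surrogate_risk_setting_def surrogate_risk_setting_axioms_def)
  obtain \<theta>0 where "\<theta>0 \<in> \<Theta>"
    and global: "\<forall>h\<in>borel_measurable MX. surrogate_risk M X psi (g \<theta>0) \<le> surrogate_risk M X psi h"
    using assms(15) by blast
  have "(\<forall>\<theta>\<in>\<Theta>. surrogate_risk M X psi (g \<theta>s) \<le> surrogate_risk M X psi (g \<theta>))
      \<longleftrightarrow> (\<forall>h\<in>borel_measurable MX. surrogate_risk M X psi (g \<theta>s) \<le> surrogate_risk M X psi h)"
    using \<open>\<theta>0 \<in> \<Theta>\<close> global assms(14) by (meson order_trans)
  also have "\<dots> \<longleftrightarrow> (AE w in M. cond_exp_given M MX X
             (\<lambda>v. \<bar>psi v\<bar> * logistic_loss_deriv (g \<theta>s (X v)) (sgn (psi v))) w = 0)"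
    using assms(14,16) by (intro surrogate_risk_minimal_iff_cond_exp_deriv_zero) blast
  finally show ?thesis .
qed

end
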